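(* Let $\gamma > 1$ and let $I$ be a $\gamma$-stable instance of the Euclidean Steiner tree problem with optimal Steiner tree $\mathrm{OPT}$. If $a_1, a_2$ are distinct terminals and $b$ is a Steiner point such that $a_1 b$ and $a_2 b$ are both edges of $\mathrm{OPT}$, then the angle $\angle a_1 b a_2$ is greater than $2\sin^{-1}(\gamma/2)$.
   Context: An instance of the Euclidean Steiner tree problem consists of a finite set $V \subset \mathbb{R}^d$, a set $T \subseteq V$ of terminals, and the complete graph on $V$ with edge weights $w_{uv} = \|u - v\|$. Points of $V \setminus T$ are Steiner points. A Steiner tree is a tree in this complete graph whose vertex set contains all of $T$; its weight is the sum of its edge weights. For $\gamma > 1$, the instance is $\gamma$-stable if it has a minimum-weight Steiner tree $\mathrm{OPT}$ such that for every $w' : V \times V \to \mathbb{R}_{\ge 0}$ with $w_{uv} \le w'_{uv} \le \gamma w_{uv}$ for all $u,v$, every minimum-weight Steiner tree with respect to $w'$ equals $\mathrm{OPT}$ (the $w'$ need not be Euclidean). $\angle a_1 b a_2 \in [0,\pi]$ is the angle at $b$ between the vectors $a_1 - b$ and $a_2 - b$. *)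

theory Defs
  imports "HOL-Analysis.Analysis"
begin

definition adj :: "'a set set \<Rightarrow> 'a \<Rightarrow> 'a \<Rightarrow> bool" where
  "adj E x y \<longleftrightarrow> {x, y} \<in> E"

definition graph_on :: "'a set \<Rightarrow> 'a set set \<Rightarrow> bool" where
  "graph_on S E \<longleftrightarrow> (\<forall>e\<in>E. \<exists>u v. u \<in> S \<and> v \<in> S \<and> u \<noteq> v \<and> e = {u, v})"

definition connected_graph :: "'a set \<Rightarrow> 'a set set \<Rightarrow> bool" where
  "connected_graph S E \<longleftrightarrow> (\<forall>u\<in>S. \<forall>v\<in>S. (adj E)\<^sup>*\<^sup>* u v)"

definition acyclic_graph :: "'a set set \<Rightarrow> bool" where
  "acyclic_graph E \<longleftrightarrow> (\<forall>u v. {u, v} \<in> E \<longrightarrow> \<not> (adj (E - {{u, v}}))\<^sup>*\<^sup>* u v)"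

definition is_tree :: "'a set \<Rightarrow> 'a set set \<Rightarrow> bool" where
  "is_tree S E \<longleftrightarrow> S \<noteq> {} \<and> graph_on S E \<and> connected_graph S E \<and> acyclic_graph E"

text \<open>A Steiner tree for terminals T in the complete graph on V.\<close>
definition steiner_tree :: "'a set \<Rightarrow> 'a set \<Rightarrow> 'a set \<times> 'a set set \<Rightarrow> bool" where
  "steiner_tree V T X \<longleftrightarrow> fst X \<subseteq> V \<and> T \<subseteq> fst X \<and> is_tree (fst X) (snd X)"

definition tree_weight :: "('a set \<Rightarrow> real) \<Rightarrow> 'a set \<times> 'a set set \<Rightarrow> real" where
  "tree_weight w X = (\<Sum>e\<in>snd X. w e)"

definition min_steiner_tree :: "('a set \<Rightarrow> real) \<Rightarrow> 'a set \<Rightarrow> 'a set \<Rightarrow> 'a set \<times> 'a set set \<Rightarrow> bool" where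
  "min_steiner_tree w V T X \<longleftrightarrow> steiner_tree V T X \<and>
     (\<forall>Y. steiner_tree V T Y \<longrightarrow> tree_weight w X \<le> tree_weight w Y)"

definition eucl_w :: "'a::euclidean_space set \<Rightarrow> real" where
  "eucl_w e = (THE d. \<exists>u v. e = {u, v} \<and> d = norm (u - v))"

definition stable_opt :: "real \<Rightarrow> 'a::euclidean_space set \<Rightarrow> 'a set \<Rightarrow> 'a set \<times> 'a set set \<Rightarrow> bool" where
  "stable_opt \<gamma> V T OPT \<longleftrightarrow> min_steiner_tree eucl_w V T OPT \<and>
     (\<forall>w'. (\<forall>u\<in>V. \<forall>v\<in>V. u \<noteq> v \<longrightarrow>
              norm (u - v) \<le> w' {u, v} \<and> w' {u, v} \<le> \<gamma> * norm (u - v)) \<longrightarrow>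
           (\<forall>X. min_steiner_tree w' V T X \<longrightarrow> X = OPT))"

definition gamma_stable :: "real \<Rightarrow> 'a::euclidean_space set \<Rightarrow> 'a set \<Rightarrow> bool" where
  "gamma_stable \<gamma> V T \<longleftrightarrow> (\<exists>OPT. stable_opt \<gamma> V T OPT)"

definition angle_at :: "'a::euclidean_space \<Rightarrow> 'a \<Rightarrow> 'a \<Rightarrow> real" where
  "angle_at a1 b a2 = arccos (((a1 - b) \<bullet> (a2 - b)) / (norm (a1 - b) * norm (a2 - b)))"

end

theory Submission
  imports Defs
begin

text \<open>Exchanging the edge \<open>a\<^sub>1b\<close> of OPT for \<open>a\<^sub>1a\<^sub>2\<close> (sliding it along \<open>ba\<^sub>2\<close>)
  gives another Steiner tree. Under the admissible perturbation that multiplies only the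
  weight of \<open>a\<^sub>1b\<close> by \<open>\<gamma>\<close>, stability makes this tree strictly heavier than OPT, whence
  \<open>\<gamma> |a\<^sub>1 - b| < |a\<^sub>1 - a\<^sub>2|\<close>, and symmetrically \<open>\<gamma> |a\<^sub>2 - b| < |a\<^sub>1 - a\<^sub>2|\<close>.
  With \<open>x = |a\<^sub>1 - b|\<close>, \<open>y = |a\<^sub>2 - b|\<close> and \<open>\<theta>\<close> the angle at \<open>b\<close>, the law of cosines
  gives \<open>|a\<^sub>1 - a\<^sub>2|\<^sup>2 - (x - y)\<^sup>2 = 2xy(1 - cos \<theta>)\<close>, and the two inequalities make the
  left-hand side exceed \<open>\<gamma>\<^sup>2 xy\<close>. Hence \<open>cos \<theta> < 1 - \<gamma>\<^sup>2/2 = cos (2 arcsin (\<gamma>/2))\<close>;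
  this also forces \<open>\<gamma> < 2\<close>, so the bound is meaningful.\<close>

lemma adj_commute: "adj E x y \<longleftrightarrow> adj E y x"
  unfolding adj_def by (simp add: insert_commute)

lemma rtranclp_adj_sym: "(adj E)\<^sup>*\<^sup>* x y \<Longrightarrow> (adj E)\<^sup>*\<^sup>* y x"
  using symp_rtranclp[of "adj E"] adj_commute by (metis sympD sympI)

lemma rtranclp_adj_edge: "{x, y} \<in> E \<Longrightarrow> (adj E)\<^sup>*\<^sup>* x y"
  by (simp add: adj_def r_into_rtranclp)

lemma rtranclp_adj_mono:
  assumes "(adj E)\<^sup>*\<^sup>* x y" and "E \<subseteq> F"
  shows "(adj F)\<^sup>*\<^sup>* x y"
proof -
  have "adj E \<le> adj F"
    using assms(2) by (auto simp: adj_def)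
  then show ?thesis
    using rtranclp_mono assms(1) by blast
qed

lemma rtranclp_adj_insert_cases:
  assumes "(adj (insert {p, q} F))\<^sup>*\<^sup>* x y"
  shows "(adj F)\<^sup>*\<^sup>* x y \<or> ((adj F)\<^sup>*\<^sup>* x p \<and> (adj F)\<^sup>*\<^sup>* q y)
         \<or> ((adj F)\<^sup>*\<^sup>* x q \<and> (adj F)\<^sup>*\<^sup>* p y)"
  using assms
proof (induction rule: rtranclp_induct)
  case base
  then show ?case by simp
next
  case (step y z)
  show ?case
  proof (cases "adj F y z")
    case True
    with step.IH show ?thesis by (meson rtranclp.rtrancl_into_rtrancl)
  next
    case False
    with step.hyps(2) have "(y = p \<and> z = q) \<or> (y = q \<and> z = p)"
      by (auto simp: adj_def doubleton_eq_iff)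
    with step.IH show ?thesis by (metis rtranclp_adj_sym rtranclp.rtrancl_refl rtranclp_trans)
  qed
qed

lemma rtranclp_adj_insert_shortcut:
  assumes "{p, u} \<in> H"
  shows "(adj (insert {q, p} H))\<^sup>*\<^sup>* = (adj (insert {q, u} H))\<^sup>*\<^sup>*"
proof -
  have shortcut: "(adj (insert {q, p'} H))\<^sup>*\<^sup>* \<le> (adj (insert {q, u'} H))\<^sup>*\<^sup>*"
    if "{p', u'} \<in> H" for p' u'
  proof -
    have "(adj (insert {q, u'} H))\<^sup>*\<^sup>* q p'"
      using that by (meson insertI1 insertI2 rtranclp_adj_edge rtranclp_adj_sym rtranclp_trans)
    moreover have "(adj (insert {q, u'} H))\<^sup>*\<^sup>* a c" if "{a, c} \<in> H" for a c
      using that by (simp add: rtranclp_adj_edge)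
    ultimately have "adj (insert {q, p'} H) \<le> (adj (insert {q, u'} H))\<^sup>*\<^sup>*"
      by (auto simp: adj_def doubleton_eq_iff intro: rtranclp_adj_sym)
    then have "(adj (insert {q, p'} H))\<^sup>*\<^sup>* \<le> ((adj (insert {q, u'} H))\<^sup>*\<^sup>*)\<^sup>*\<^sup>*"
      by (rule rtranclp_mono)
    then show ?thesis
      by simp
  qed
  show ?thesis
    using antisym[OF shortcut[of p u] shortcut[of u p]] assms by (simp add: insert_commute)
qed

lemma graph_on_edgeD:
  assumes "graph_on S E" and "{x, y} \<in> E"
  shows "x \<noteq> y" and "x \<in> S" and "y \<in> S"
proof -
  obtain u v where "u \<in> S" "v \<in> S" "u \<noteq> v" "{x, y} = {u, v}"
    using assms unfolding graph_on_def by blast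
  then show "x \<noteq> y" "x \<in> S" "y \<in> S"
    by (auto simp: doubleton_eq_iff)
qed

lemma acyclic_graphD:
  assumes "acyclic_graph E" and "{u, v} \<in> E" and "F \<subseteq> E - {{u, v}}"
  shows "\<not> (adj F)\<^sup>*\<^sup>* u v"
proof
  assume "(adj F)\<^sup>*\<^sup>* u v"
  then have "(adj (E - {{u, v}}))\<^sup>*\<^sup>* u v"
    using assms(3) by (rule rtranclp_adj_mono)
  then show False
    using assms(1,2) unfolding acyclic_graph_def by blast
qed

lemma acyclic_graph_no_triangle:
  assumes "acyclic_graph E" and "{q, p} \<in> E" and "{p, u} \<in> E" and "q \<noteq> u" and "q \<noteq> p" and "p \<noteq> u"
  shows "{q, u} \<notin> E"
proof
  assume qu: "{q, u} \<in> E"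
  have "{q, p} \<in> E - {{q, u}}" and "{p, u} \<in> E - {{q, u}}"
    using assms(2-6) by (auto simp: doubleton_eq_iff)
  then have "(adj (E - {{q, u}}))\<^sup>*\<^sup>* q u"
    by (meson rtranclp_adj_edge rtranclp_trans)
  with acyclic_graphD[OF assms(1) qu order_refl] show False
    by simp
qed

lemma is_tree_slide_edge:
  assumes tree: "is_tree S E" and qp: "{q, p} \<in> E" and pu: "{p, u} \<in> E" and "q \<noteq> u"
  shows "is_tree S (insert {q, u} (E - {{q, p}}))" (is "is_tree S ?E'")
proof -
  have graph: "graph_on S E" and acyc: "acyclic_graph E"
    using tree unfolding is_tree_def by auto
  have "q \<noteq> p" "p \<noteq> u" "q \<in> S" "u \<in> S"
    using graph_on_edgeD[OF graph qp] graph_on_edgeD[OF graph pu] by auto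
  with acyc qp pu \<open>q \<noteq> u\<close> have qu: "{q, u} \<notin> E"
    by (intro acyclic_graph_no_triangle)
  have ne: "{q, p} \<noteq> {p, u}" "{q, u} \<noteq> {q, p}" "{q, u} \<noteq> {p, u}"
    using \<open>q \<noteq> p\<close> \<open>p \<noteq> u\<close> \<open>q \<noteq> u\<close> by (auto simp: doubleton_eq_iff)
  have "graph_on S ?E'"
    using graph \<open>q \<noteq> u\<close> \<open>q \<in> S\<close> \<open>u \<in> S\<close> unfolding graph_on_def by auto
  moreover have "connected_graph S ?E'"
  proof -
    have "E = insert {q, p} (E - {{q, p}})"
      using qp by blast
    then have "(adj E)\<^sup>*\<^sup>* = (adj ?E')\<^sup>*\<^sup>*"
      using rtranclp_adj_insert_shortcut[of p u "E - {{q, p}}" q] pu ne by auto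
    then show ?thesis
      using tree unfolding is_tree_def connected_graph_def by simp
  qed
  moreover have "acyclic_graph ?E'"
    unfolding acyclic_graph_def
  proof (intro allI impI notI)
    fix x y
    assume xy: "{x, y} \<in> ?E'" and path: "(adj (?E' - {{x, y}}))\<^sup>*\<^sup>* x y"
    consider "{x, y} = {q, u}" | "{x, y} = {p, u}" | "{x, y} \<in> E - {{q, p}, {p, u}}"
      using xy by auto
    then show False
    proof cases
      case 1
      then have xy_cases: "x = q \<and> y = u \<or> x = u \<and> y = q"
        by (auto simp: doubleton_eq_iff)
      have "?E' - {{x, y}} = E - {{q, p}}"
        using 1 qu by auto
      with path have "(adj (E - {{q, p}}))\<^sup>*\<^sup>* x y"
        by simp
      with xy_cases have "(adj (E - {{q, p}}))\<^sup>*\<^sup>* q u"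
        by (meson rtranclp_adj_sym)
      moreover have "(adj (E - {{q, p}}))\<^sup>*\<^sup>* u p"
        using pu ne by (intro rtranclp_adj_edge) (simp add: insert_commute)
      ultimately show False
        using acyclic_graphD[OF acyc qp order_refl] by (meson rtranclp_trans)
    next
      case 2
      then have xy_cases: "x = p \<and> y = u \<or> x = u \<and> y = p"
        by (auto simp: doubleton_eq_iff)
      let ?H = "E - {{q, p}, {p, u}}"
      have "?E' - {{p, u}} = insert {q, u} ?H"
        using ne qu by auto
      with path 2 have "(adj (insert {q, u} ?H))\<^sup>*\<^sup>* x y"
        by simp
      with xy_cases have "(adj (insert {q, u} ?H))\<^sup>*\<^sup>* p u"
        by (meson rtranclp_adj_sym)
      then have "(adj ?H)\<^sup>*\<^sup>* p u \<or> (adj ?H)\<^sup>*\<^sup>* p q"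
        by (blast dest: rtranclp_adj_insert_cases)
      moreover have "\<not> (adj ?H)\<^sup>*\<^sup>* p u"
        by (rule acyclic_graphD[OF acyc pu]) auto
      moreover have "\<not> (adj ?H)\<^sup>*\<^sup>* q p"
        by (rule acyclic_graphD[OF acyc qp]) auto
      ultimately show False
        by (meson rtranclp_adj_sym)
    next
      case 3
      let ?H = "E - {{q, p}, {x, y}}"
      have xyE: "{x, y} \<in> E" and "{x, y} \<noteq> {p, u}"
        using 3 by blast+
      have "?E' - {{x, y}} = insert {q, u} ?H"
        using xyE qu by auto
      moreover have "insert {q, p} ?H = E - {{x, y}}"
        using 3 qp by auto
      moreover have "{p, u} \<in> ?H"
        using pu ne(1) \<open>{x, y} \<noteq> {p, u}\<close> by blast
      ultimately have "(adj (E - {{x, y}}))\<^sup>*\<^sup>* x y"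
        using path rtranclp_adj_insert_shortcut[of p u ?H q] by simp
      then show False
        using acyclic_graphD[OF acyc xyE order_refl] by simp
    qed
  qed
  ultimately show ?thesis
    using tree unfolding is_tree_def by blast
qed

lemma graph_on_subset_Pow:
  assumes "graph_on S E"
  shows "E \<subseteq> Pow S"
proof
  fix e
  assume "e \<in> E"
  then obtain u v where "u \<in> S" "v \<in> S" "e = {u, v}"
    using assms unfolding graph_on_def by blast
  then show "e \<in> Pow S"
    by simp
qed

lemma finite_steiner_trees:
  assumes "finite V"
  shows "finite {X. steiner_tree V T X}"
proof (rule finite_subset)
  show "{X. steiner_tree V T X} \<subseteq> Pow V \<times> Pow (Pow V)"
  proof
    fix X
    assume "X \<in> {X. steiner_tree V T X}"
    then have "fst X \<subseteq> V" and "snd X \<subseteq> Pow (fst X)"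
      using graph_on_subset_Pow unfolding steiner_tree_def is_tree_def by auto
    then show "X \<in> Pow V \<times> Pow (Pow V)"
      by (cases X) auto
  qed
  show "finite (Pow V \<times> Pow (Pow V))"
    using assms by simp
qed

lemma min_steiner_tree_exists:
  assumes "finite V" and "steiner_tree V T Y"
  shows "\<exists>X. min_steiner_tree w V T X"
proof -
  obtain X where "is_arg_min (tree_weight w) (\<lambda>X. X \<in> {X. steiner_tree V T X}) X"
    using ex_is_arg_min_if_finite[OF finite_steiner_trees[OF assms(1)]] assms(2) by blast
  then show ?thesis
    unfolding is_arg_min_linorder min_steiner_tree_def by blast
qed

lemma stable_opt_less_weight:
  assumes "finite V" and "stable_opt \<gamma> V T OPT"
    and w: "\<And>u v. u \<in> V \<Longrightarrow> v \<in> V \<Longrightarrow> u \<noteq> v \<Longrightarrow>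
              norm (u - v) \<le> w {u, v} \<and> w {u, v} \<le> \<gamma> * norm (u - v)"
    and Y: "steiner_tree V T Y" "Y \<noteq> OPT"
  shows "tree_weight w OPT < tree_weight w Y"
proof (rule ccontr)
  assume "\<not> ?thesis"
  have unique: "X = OPT" if "min_steiner_tree w V T X" for X
    using assms(2) w that unfolding stable_opt_def by blast
  obtain X where "min_steiner_tree w V T X"
    using min_steiner_tree_exists[OF assms(1) Y(1)] by blast
  then have "min_steiner_tree w V T OPT"
    using unique by simp
  with \<open>\<not> ?thesis\<close> have "tree_weight w Y \<le> tree_weight w Z" if "steiner_tree V T Z" for Z
    using that unfolding min_steiner_tree_def by fastforce
  with Y(1) have "min_steiner_tree w V T Y"
    unfolding min_steiner_tree_def by blast
  with unique Y(2) show False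
    by blast
qed

lemma eucl_w_doubleton: "eucl_w {u, v} = norm (u - v)"
  unfolding eucl_w_def
proof (rule the_equality)
  fix d
  assume "\<exists>u' v'. {u, v} = {u', v'} \<and> d = norm (u' - v')"
  then show "d = norm (u - v)"
    by (auto simp: doubleton_eq_iff norm_minus_commute)
qed blast

lemma stable_opt_adjacent_edge_less:
  assumes "1 \<le> \<gamma>" and "finite V" and stable: "stable_opt \<gamma> V T OPT"
    and e1: "{a1, b} \<in> snd OPT" and e2: "{b, a2} \<in> snd OPT" and "a1 \<noteq> a2"
  shows "\<gamma> * norm (a1 - b) < norm (a1 - a2)"
proof -
  obtain S E where OPT: "OPT = (S, E)"
    by fastforce
  have st: "steiner_tree V T (S, E)"
    using stable OPT unfolding stable_opt_def min_steiner_tree_def by blast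
  then have tree: "is_tree S E"
    unfolding steiner_tree_def by simp
  then have graph: "graph_on S E" and acyc: "acyclic_graph E"
    unfolding is_tree_def by auto
  have "a1 \<noteq> b" "b \<noteq> a2" "S \<subseteq> V"
    using graph_on_edgeD[OF graph] e1 e2 st OPT unfolding steiner_tree_def by auto
  have a1a2: "{a1, a2} \<notin> E"
    using acyclic_graph_no_triangle[OF acyc] e1 e2 OPT \<open>a1 \<noteq> a2\<close> \<open>a1 \<noteq> b\<close> \<open>b \<noteq> a2\<close> by simp
  have ne: "{a1, b} \<noteq> {a1, a2}"
    using \<open>b \<noteq> a2\<close> by (auto simp: doubleton_eq_iff)
  have finE: "finite E"
    using graph_on_subset_Pow[OF graph] \<open>S \<subseteq> V\<close> assms(2) by (meson Pow_mono finite_Pow_iff finite_subset)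
  define Y where "Y = (S, insert {a1, a2} (E - {{a1, b}}))"
  have Y_tree: "steiner_tree V T Y"
    using is_tree_slide_edge[OF tree] e1 e2 OPT st \<open>a1 \<noteq> a2\<close>
    unfolding Y_def steiner_tree_def by simp
  have "{a1, b} \<notin> snd Y"
    using ne by (simp add: Y_def)
  then have "Y \<noteq> OPT"
    using e1 by auto
  define w where "w e = (if e = {a1, b} then \<gamma> else 1) * eucl_w e" for e
  have "norm (u - v) \<le> w {u, v} \<and> w {u, v} \<le> \<gamma> * norm (u - v)" for u v
    using assms(1) by (simp add: w_def eucl_w_doubleton mult_le_cancel_right1)
  then have "tree_weight w OPT < tree_weight w Y"
    using stable_opt_less_weight[OF assms(2) stable _ Y_tree \<open>Y \<noteq> OPT\<close>] by blast
  also have "tree_weight w Y = tree_weight w OPT + w {a1, a2} - w {a1, b}"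
    using finE e1 a1a2 OPT by (simp add: Y_def tree_weight_def sum_diff1)
  also have "\<dots> = tree_weight w OPT + norm (a1 - a2) - \<gamma> * norm (a1 - b)"
    using ne by (simp add: w_def eucl_w_doubleton)
  finally show ?thesis
    by simp
qed

lemma sq_mult_less_sq_minus_sq_diff:
  fixes \<gamma> x y d :: real
  assumes "1 \<le> \<gamma>" and "0 < x" and "0 < y" and "\<gamma> * x < d" and "\<gamma> * y < d"
  shows "\<gamma>\<^sup>2 * x * y < d\<^sup>2 - (x - y)\<^sup>2"
  using assms
proof (induction x y rule: linorder_wlog)
  case (le y x)
  have "(\<gamma> * x)\<^sup>2 < d\<^sup>2"
    using le.prems by (intro power_strict_mono) auto
  \<comment> \<open>then \<open>d\<^sup>2 - (x - y)\<^sup>2 - \<gamma>\<^sup>2 x y > (x - y) (\<gamma>\<^sup>2 x - (x - y)) \<ge> 0\<close>\<close>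
  moreover have "0 \<le> (x - y) * (\<gamma>\<^sup>2 * x - (x - y))"
  proof (rule mult_nonneg_nonneg)
    have "1 \<le> \<gamma>\<^sup>2"
      using le.prems(1) by (simp add: one_le_power)
    then have "x \<le> \<gamma>\<^sup>2 * x"
      using le.prems mult_right_mono[of 1 "\<gamma>\<^sup>2" x] by simp
    then show "0 \<le> \<gamma>\<^sup>2 * x - (x - y)"
      using le.prems by linarith
  qed (use le.hyps in simp)
  ultimately show ?case
    by (simp add: power2_eq_square algebra_simps)
next
  case (sym x y)
  then show ?case
    by (simp add: mult.commute power2_commute mult.left_commute)
qed

lemma two_arcsin_less_arccos:
  fixes s c :: real
  assumes "0 \<le> s" and "-1 \<le> c" and "c < 1 - 2 * s\<^sup>2"
  shows "2 * arcsin s < arccos c"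
proof -
  have "s\<^sup>2 < 1"
    using assms(2,3) by simp
  then have "s < 1"
    unfolding abs_square_less_1 by simp
  then have "0 \<le> 2 * arcsin s" "2 * arcsin s \<le> pi"
    using assms(1) arcsin_nonneg arcsin_le_mono[of s 1] by auto
  moreover have "cos (2 * arcsin s) = 1 - 2 * s\<^sup>2"
    using assms(1) \<open>s < 1\<close> by (simp add: cos_double_sin)
  ultimately have "2 * arcsin s = arccos (1 - 2 * s\<^sup>2)"
    by (metis arccos_cos)
  also have "\<dots> < arccos c"
    using assms(2,3) by (intro arccos_less_arccos) (simp_all add: zero_le_power2)
  finally show ?thesis .
qed

lemma angle_at_gt_two_arcsin:
  fixes a1 a2 b :: "'a::euclidean_space"
  assumes "1 \<le> \<gamma>" and "a1 \<noteq> b" and "a2 \<noteq> b"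
    and "\<gamma> * norm (a1 - b) < norm (a1 - a2)" and "\<gamma> * norm (a2 - b) < norm (a1 - a2)"
  shows "2 * arcsin (\<gamma> / 2) < angle_at a1 b a2"
proof -
  define x y p where "x = norm (a1 - b)" and "y = norm (a2 - b)" and "p = (a1 - b) \<bullet> (a2 - b)"
  have "0 < x" "0 < y"
    using assms(2,3) by (simp_all add: x_def y_def)
  have "\<gamma> * x < norm (a1 - a2)" and "\<gamma> * y < norm (a1 - a2)"
    using assms(4,5) by (simp_all add: x_def y_def)
  then have "\<gamma>\<^sup>2 * x * y < (norm (a1 - a2))\<^sup>2 - (x - y)\<^sup>2"
    by (rule sq_mult_less_sq_minus_sq_diff[OF assms(1) \<open>0 < x\<close> \<open>0 < y\<close>])
  also have "(norm (a1 - a2))\<^sup>2 = x\<^sup>2 + y\<^sup>2 - 2 * p"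
  proof -
    have "a1 - a2 = (a1 - b) - (a2 - b)"
      by simp
    then show ?thesis
      unfolding x_def y_def p_def
      by (simp only: power2_norm_eq_inner inner_diff_left inner_diff_right inner_commute) simp
  qed
  finally have "\<gamma>\<^sup>2 * x * y < 2 * (x * y - p)"
    by (simp add: power2_diff)
  then have "p < (1 - 2 * (\<gamma> / 2)\<^sup>2) * (x * y)"
    by (simp add: power_divide algebra_simps)
  then have "p / (x * y) < 1 - 2 * (\<gamma> / 2)\<^sup>2"
    using \<open>0 < x\<close> \<open>0 < y\<close> by (simp add: pos_divide_less_eq)
  moreover have "-1 \<le> p / (x * y)"
    using Cauchy_Schwarz_ineq2[of "a1 - b" "a2 - b"] \<open>0 < x\<close> \<open>0 < y\<close>
    by (simp add: x_def y_def p_def pos_le_divide_eq)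
  ultimately have "2 * arcsin (\<gamma> / 2) < arccos (p / (x * y))"
    using assms(1) by (intro two_arcsin_less_arccos) simp_all
  then show ?thesis
    by (simp add: angle_at_def x_def y_def p_def)
qed

theorem mainTheorem10:
  fixes V T :: "'a::euclidean_space set" and \<gamma> :: real
    and OPT :: "'a set \<times> 'a set set" and a1 a2 b :: 'a
  assumes "\<gamma> > 1"
    and "finite V" and "T \<subseteq> V"
    and "stable_opt \<gamma> V T OPT"
    and "a1 \<in> T" and "a2 \<in> T" and "a1 \<noteq> a2"
    and "b \<in> V - T"
    and "{a1, b} \<in> snd OPT" and "{a2, b} \<in> snd OPT"
  shows "angle_at a1 b a2 > 2 * arcsin (\<gamma> / 2)"
proof -
  have "1 \<le> \<gamma>" and "a1 \<noteq> b" and "a2 \<noteq> b"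
    using assms(1,5,6,8) by auto
  have "\<gamma> * norm (a1 - b) < norm (a1 - a2)"
    using stable_opt_adjacent_edge_less[OF \<open>1 \<le> \<gamma>\<close> assms(2,4,9)] assms(7,10)
    by (simp add: insert_commute)
  moreover have "\<gamma> * norm (a2 - b) < norm (a2 - a1)"
    using stable_opt_adjacent_edge_less[OF \<open>1 \<le> \<gamma>\<close> assms(2,4,10)] assms(7,9)
    by (simp add: insert_commute)
  then have "\<gamma> * norm (a2 - b) < norm (a1 - a2)"
    by (simp only: norm_minus_commute)
  ultimately show ?thesis
    by (rule angle_at_gt_two_arcsin[OF \<open>1 \<le> \<gamma>\<close> \<open>a1 \<noteq> b\<close> \<open>a2 \<noteq> b\<close>])
qed

end
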